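(* Let $\mathcal{A}$ be an admissibly deflation-percolating subcategory of a conflation category $\mathcal{C}$. Let $f\colon C\to A$ be a morphism in $\mathcal{C}$ with $A\in\mathcal{A}$. If $f$ is a monomorphism, then $f$ is an inflation; if $f$ is an epimorphism, then $f$ is a deflation. In particular, every morphism $X\to 0$ is a deflation.
   Context: A conflation category is an additive category together with a class of kernel-cokernel pairs $A\xrightarrow{f}B\xrightarrow{g}C$ ($f=\ker g$, $g=\operatorname{coker} f$), closed under isomorphisms, called conflations; first map an inflation, second a deflation. A non-empty full subcategory $\mathcal{A}$ of a conflation category $\mathcal{C}$ is admissibly deflation-percolating if: (A1) for every conflation $A'\rightarrowtail A\twoheadrightarrow A''$, $A\in\mathcal{A}$ iff $A',A''\in\mathcal{A}$; (A2) every morphism $C\to A$ with $A\in\mathcal{A}$ factors as a deflation $C\twoheadrightarrow A'$ followed by an inflation $A'\rightarrowtail A$ with $A'\in\mathcal{A}$; (A3) if $a\colon C\rightarrowtail D$ is an inflation and $b\colon C\twoheadrightarrow A$ a deflation with $A\in\mathcal{A}$, the pushout of $a$ along $b$ exists and yields a deflation $D\twoheadrightarrow P$ and an inflation $A\rightarrowtail P$. *)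

theory Defs
  imports Main
begin

text \<open>An (additive) category presented concretely: objects, morphisms, domain,
 codomain, identities, composition (Cp g f = g after f), and the abelian group
 structure on hom-sets (addition, zero morphisms, negation).\<close>

record ('o, 'm) precat =
  Ob :: "'o set"
  Ar :: "'m set"
  Dm :: "'m \<Rightarrow> 'o"
  Cd :: "'m \<Rightarrow> 'o"
  Idm :: "'o \<Rightarrow> 'm"
  Cp :: "'m \<Rightarrow> 'm \<Rightarrow> 'm"
  Ad :: "'m \<Rightarrow> 'm \<Rightarrow> 'm"
  Zr :: "'o \<Rightarrow> 'o \<Rightarrow> 'm"
  Ng :: "'m \<Rightarrow> 'm"

definition hom :: "('o, 'm) precat \<Rightarrow> 'o \<Rightarrow> 'o \<Rightarrow> 'm set" where
  "hom C X Y = {f \<in> Ar C. Dm C f = X \<and> Cd C f = Y}"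

definition is_category :: "('o, 'm) precat \<Rightarrow> bool" where
  "is_category C \<longleftrightarrow>
     (\<forall>f \<in> Ar C. Dm C f \<in> Ob C \<and> Cd C f \<in> Ob C) \<and>
     (\<forall>X \<in> Ob C. Idm C X \<in> hom C X X) \<and>
     (\<forall>X Y Z f g. f \<in> hom C X Y \<longrightarrow> g \<in> hom C Y Z \<longrightarrow> Cp C g f \<in> hom C X Z) \<and>
     (\<forall>X Y f. f \<in> hom C X Y \<longrightarrow> Cp C f (Idm C X) = f \<and> Cp C (Idm C Y) f = f) \<and>
     (\<forall>W X Y Z f g h. f \<in> hom C W X \<longrightarrow> g \<in> hom C X Y \<longrightarrow> h \<in> hom C Y Z \<longrightarrow>
        Cp C h (Cp C g f) = Cp C (Cp C h g) f)"

definition is_preadditive :: "('o, 'm) precat \<Rightarrow> bool" where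
  "is_preadditive C \<longleftrightarrow> is_category C \<and>
     (\<forall>X \<in> Ob C. \<forall>Y \<in> Ob C.
        Zr C X Y \<in> hom C X Y \<and>
        (\<forall>f \<in> hom C X Y. \<forall>g \<in> hom C X Y. Ad C f g \<in> hom C X Y) \<and>
        (\<forall>f \<in> hom C X Y. Ng C f \<in> hom C X Y) \<and>
        (\<forall>f \<in> hom C X Y. \<forall>g \<in> hom C X Y. \<forall>h \<in> hom C X Y.
           Ad C (Ad C f g) h = Ad C f (Ad C g h)) \<and>
        (\<forall>f \<in> hom C X Y. \<forall>g \<in> hom C X Y. Ad C f g = Ad C g f) \<and>
        (\<forall>f \<in> hom C X Y. Ad C f (Zr C X Y) = f) \<and>
        (\<forall>f \<in> hom C X Y. Ad C f (Ng C f) = Zr C X Y)) \<and>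
     (\<forall>X Y Z f g h. f \<in> hom C X Y \<longrightarrow> g \<in> hom C X Y \<longrightarrow> h \<in> hom C Y Z \<longrightarrow>
        Cp C h (Ad C f g) = Ad C (Cp C h f) (Cp C h g)) \<and>
     (\<forall>X Y Z f g h. h \<in> hom C X Y \<longrightarrow> f \<in> hom C Y Z \<longrightarrow> g \<in> hom C Y Z \<longrightarrow>
        Cp C (Ad C f g) h = Ad C (Cp C f h) (Cp C g h))"

definition zero_object :: "('o, 'm) precat \<Rightarrow> 'o \<Rightarrow> bool" where
  "zero_object C Z \<longleftrightarrow> Z \<in> Ob C \<and>
     (\<forall>X \<in> Ob C. (\<exists>!f. f \<in> hom C X Z) \<and> (\<exists>!f. f \<in> hom C Z X))"

definition is_biproduct ::
  "('o, 'm) precat \<Rightarrow> 'o \<Rightarrow> 'o \<Rightarrow> 'o \<Rightarrow> 'm \<Rightarrow> 'm \<Rightarrow> 'm \<Rightarrow> 'm \<Rightarrow> bool" where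
  "is_biproduct C X Y P i1 i2 p1 p2 \<longleftrightarrow> P \<in> Ob C \<and>
     i1 \<in> hom C X P \<and> i2 \<in> hom C Y P \<and> p1 \<in> hom C P X \<and> p2 \<in> hom C P Y \<and>
     Cp C p1 i1 = Idm C X \<and> Cp C p2 i2 = Idm C Y \<and>
     Cp C p1 i2 = Zr C Y X \<and> Cp C p2 i1 = Zr C X Y \<and>
     Ad C (Cp C i1 p1) (Cp C i2 p2) = Idm C P"

definition is_additive :: "('o, 'm) precat \<Rightarrow> bool" where
  "is_additive C \<longleftrightarrow> is_preadditive C \<and> (\<exists>Z. zero_object C Z) \<and>
     (\<forall>X \<in> Ob C. \<forall>Y \<in> Ob C. \<exists>P i1 i2 p1 p2. is_biproduct C X Y P i1 i2 p1 p2)"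

definition is_iso :: "('o, 'm) precat \<Rightarrow> 'm \<Rightarrow> bool" where
  "is_iso C f \<longleftrightarrow> f \<in> Ar C \<and>
     (\<exists>g \<in> hom C (Cd C f) (Dm C f). Cp C g f = Idm C (Dm C f) \<and> Cp C f g = Idm C (Cd C f))"

definition is_mono :: "('o, 'm) precat \<Rightarrow> 'm \<Rightarrow> bool" where
  "is_mono C f \<longleftrightarrow> f \<in> Ar C \<and>
     (\<forall>T g h. g \<in> hom C T (Dm C f) \<longrightarrow> h \<in> hom C T (Dm C f) \<longrightarrow>
        Cp C f g = Cp C f h \<longrightarrow> g = h)"

definition is_epi :: "('o, 'm) precat \<Rightarrow> 'm \<Rightarrow> bool" where
  "is_epi C f \<longleftrightarrow> f \<in> Ar C \<and>
     (\<forall>T g h. g \<in> hom C (Cd C f) T \<longrightarrow> h \<in> hom C (Cd C f) T \<longrightarrow>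
        Cp C g f = Cp C h f \<longrightarrow> g = h)"

text \<open>f = ker g (with Cd f = Dm g).\<close>
definition is_kernel :: "('o, 'm) precat \<Rightarrow> 'm \<Rightarrow> 'm \<Rightarrow> bool" where
  "is_kernel C f g \<longleftrightarrow> f \<in> Ar C \<and> g \<in> Ar C \<and> Cd C f = Dm C g \<and>
     Cp C g f = Zr C (Dm C f) (Cd C g) \<and>
     (\<forall>T h. h \<in> hom C T (Dm C g) \<longrightarrow> Cp C g h = Zr C T (Cd C g) \<longrightarrow>
        (\<exists>!u. u \<in> hom C T (Dm C f) \<and> Cp C f u = h))"

text \<open>g = coker f (with Cd f = Dm g).\<close>
definition is_cokernel :: "('o, 'm) precat \<Rightarrow> 'm \<Rightarrow> 'm \<Rightarrow> bool" where
  "is_cokernel C g f \<longleftrightarrow> f \<in> Ar C \<and> g \<in> Ar C \<and> Cd C f = Dm C g \<and>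
     Cp C g f = Zr C (Dm C f) (Cd C g) \<and>
     (\<forall>T h. h \<in> hom C (Cd C f) T \<longrightarrow> Cp C h f = Zr C (Dm C f) T \<longrightarrow>
        (\<exists>!u. u \<in> hom C (Cd C g) T \<and> Cp C u g = h))"

definition kernel_cokernel_pair :: "('o, 'm) precat \<Rightarrow> 'm \<Rightarrow> 'm \<Rightarrow> bool" where
  "kernel_cokernel_pair C f g \<longleftrightarrow> is_kernel C f g \<and> is_cokernel C g f"

definition conflation_category :: "('o, 'm) precat \<Rightarrow> ('m \<times> 'm) set \<Rightarrow> bool" where
  "conflation_category C E \<longleftrightarrow> is_additive C \<and>
     (\<forall>(f, g) \<in> E. kernel_cokernel_pair C f g) \<and>
     (\<forall>f g f' g' a b c. (f, g) \<in> E \<longrightarrow> kernel_cokernel_pair C f' g' \<longrightarrow>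
        a \<in> hom C (Dm C f) (Dm C f') \<longrightarrow> b \<in> hom C (Cd C f) (Cd C f') \<longrightarrow>
        c \<in> hom C (Cd C g) (Cd C g') \<longrightarrow>
        is_iso C a \<longrightarrow> is_iso C b \<longrightarrow> is_iso C c \<longrightarrow>
        Cp C b f = Cp C f' a \<longrightarrow> Cp C c g = Cp C g' b \<longrightarrow> (f', g') \<in> E)"

definition inflation :: "('m \<times> 'm) set \<Rightarrow> 'm \<Rightarrow> bool" where
  "inflation E f \<longleftrightarrow> (\<exists>g. (f, g) \<in> E)"

definition deflation :: "('m \<times> 'm) set \<Rightarrow> 'm \<Rightarrow> bool" where
  "deflation E g \<longleftrightarrow> (\<exists>f. (f, g) \<in> E)"

definition is_pushout ::
  "('o, 'm) precat \<Rightarrow> 'm \<Rightarrow> 'm \<Rightarrow> 'o \<Rightarrow> 'm \<Rightarrow> 'm \<Rightarrow> bool" where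
  "is_pushout C a b P b' a' \<longleftrightarrow> a \<in> Ar C \<and> b \<in> Ar C \<and> Dm C a = Dm C b \<and> P \<in> Ob C \<and>
     b' \<in> hom C (Cd C a) P \<and> a' \<in> hom C (Cd C b) P \<and> Cp C b' a = Cp C a' b \<and>
     (\<forall>T x y. x \<in> hom C (Cd C a) T \<longrightarrow> y \<in> hom C (Cd C b) T \<longrightarrow> Cp C x a = Cp C y b \<longrightarrow>
        (\<exists>!u. u \<in> hom C P T \<and> Cp C u b' = x \<and> Cp C u a' = y))"

text \<open>Admissibly deflation-percolating (full, non-empty) subcategory, given by its
 set of objects.\<close>
definition adm_deflation_percolating ::
  "('o, 'm) precat \<Rightarrow> ('m \<times> 'm) set \<Rightarrow> 'o set \<Rightarrow> bool" where
  "adm_deflation_percolating C E \<A> \<longleftrightarrow> \<A> \<noteq> {} \<and> \<A> \<subseteq> Ob C \<and>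
     \<comment> \<open>A1\<close>
     (\<forall>(f, g) \<in> E. Cd C f \<in> \<A> \<longleftrightarrow> (Dm C f \<in> \<A> \<and> Cd C g \<in> \<A>)) \<and>
     \<comment> \<open>A2\<close>
     (\<forall>X A h. A \<in> \<A> \<longrightarrow> h \<in> hom C X A \<longrightarrow>
        (\<exists>A' d i. A' \<in> \<A> \<and> d \<in> hom C X A' \<and> i \<in> hom C A' A \<and>
           deflation E d \<and> inflation E i \<and> Cp C i d = h)) \<and>
     \<comment> \<open>A3\<close>
     (\<forall>a b. inflation E a \<longrightarrow> deflation E b \<longrightarrow> Dm C a = Dm C b \<longrightarrow> Cd C b \<in> \<A> \<longrightarrow>
        (\<exists>P b' a'. is_pushout C a b P b' a' \<and> deflation E b' \<and> inflation E a'))"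

end

theory Submission
  imports Defs
begin

(* By (A2) a morphism f : X -> A with A in the subcategory factors as a deflation d : X -> A'
   followed by an inflation i : A' -> A. If f is monic, so is d, and a monic cokernel is an
   isomorphism, hence f = i d is an inflation; dually, if f is epic then i is an epic kernel,
   hence an isomorphism, and f is a deflation. For f : X -> 0, factor some 0 -> A as in (A2):
   the deflation d : 0 -> A' is an epimorphism out of a zero object, hence an isomorphism, and
   d f is an epimorphism into A', hence a deflation by the first part; so is f = d^-1 d f. *)

lemma category_hom_Ob:
  "is_category C \<Longrightarrow> f \<in> hom C X Y \<Longrightarrow> X \<in> Ob C \<and> Y \<in> Ob C"
  unfolding is_category_def hom_def by auto

lemma comp_hom:
  "is_category C \<Longrightarrow> f \<in> hom C X Y \<Longrightarrow> g \<in> hom C Y Z \<Longrightarrow> Cp C g f \<in> hom C X Z"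
  unfolding is_category_def by blast

lemma id_hom: "is_category C \<Longrightarrow> X \<in> Ob C \<Longrightarrow> Idm C X \<in> hom C X X"
  unfolding is_category_def by blast

lemma comp_id_left: "is_category C \<Longrightarrow> f \<in> hom C X Y \<Longrightarrow> Cp C (Idm C Y) f = f"
  unfolding is_category_def by blast

lemma comp_id_right: "is_category C \<Longrightarrow> f \<in> hom C X Y \<Longrightarrow> Cp C f (Idm C X) = f"
  unfolding is_category_def by blast

lemma cat_comp_assoc:
  "is_category C \<Longrightarrow> f \<in> hom C W X \<Longrightarrow> g \<in> hom C X Y \<Longrightarrow> h \<in> hom C Y Z \<Longrightarrow>
    Cp C h (Cp C g f) = Cp C (Cp C h g) f"
  unfolding is_category_def by blast

lemma preadditive_category: "is_preadditive C \<Longrightarrow> is_category C"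
  unfolding is_preadditive_def by blast

lemma idempotent_eq_zero:
  assumes C: "is_preadditive C" and a: "a \<in> hom C X Y" and aa: "Ad C a a = a"
  shows "a = Zr C X Y"
proof -
  have X: "X \<in> Ob C" and Y: "Y \<in> Ob C"
    using category_hom_Ob[OF preadditive_category[OF C] a] by auto
  have inv: "Ad C a (Ng C a) = Zr C X Y" and unit: "Ad C a (Zr C X Y) = a"
    and assoc: "Ad C (Ad C a a) (Ng C a) = Ad C a (Ad C a (Ng C a))"
    using C X Y a unfolding is_preadditive_def by meson+
  have "Zr C X Y = Ad C (Ad C a a) (Ng C a)" using aa inv by simp
  also have "\<dots> = a" using assoc inv unit by simp
  finally show ?thesis by simp
qed

lemma comp_add_left:
  "is_preadditive C \<Longrightarrow> f \<in> hom C X Y \<Longrightarrow> g \<in> hom C X Y \<Longrightarrow> h \<in> hom C Y Z \<Longrightarrow>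
    Cp C h (Ad C f g) = Ad C (Cp C h f) (Cp C h g)"
  unfolding is_preadditive_def by meson

lemma comp_add_right:
  "is_preadditive C \<Longrightarrow> h \<in> hom C X Y \<Longrightarrow> f \<in> hom C Y Z \<Longrightarrow> g \<in> hom C Y Z \<Longrightarrow>
    Cp C (Ad C f g) h = Ad C (Cp C f h) (Cp C g h)"
  unfolding is_preadditive_def by meson

lemma zero_add_zero:
  "is_preadditive C \<Longrightarrow> X \<in> Ob C \<Longrightarrow> Y \<in> Ob C \<Longrightarrow> Ad C (Zr C X Y) (Zr C X Y) = Zr C X Y"
  unfolding is_preadditive_def by meson

(* The facts about kernels and cokernels below need only this self-dual fragment of
   preadditivity, so each cokernel statement is the kernel statement in the opposite category. *)
definition has_zero_morphisms :: "('o, 'm) precat \<Rightarrow> bool" where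
  "has_zero_morphisms C \<longleftrightarrow> is_category C \<and>
     (\<forall>X \<in> Ob C. \<forall>Y \<in> Ob C. Zr C X Y \<in> hom C X Y) \<and>
     (\<forall>X Y Z h. X \<in> Ob C \<longrightarrow> h \<in> hom C Y Z \<longrightarrow> Cp C h (Zr C X Y) = Zr C X Z) \<and>
     (\<forall>X Y Z h. Z \<in> Ob C \<longrightarrow> h \<in> hom C X Y \<longrightarrow> Cp C (Zr C Y Z) h = Zr C X Z)"

lemma preadditive_has_zero_morphisms:
  assumes C: "is_preadditive C"
  shows "has_zero_morphisms C"
  unfolding has_zero_morphisms_def
proof (intro conjI ballI allI impI)
  have cat: "is_category C" using C by (rule preadditive_category)
  then show "is_category C" .
  show "Zr C X Y \<in> hom C X Y" if "X \<in> Ob C" "Y \<in> Ob C" for X Y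
    using C that unfolding is_preadditive_def by blast
  show "Cp C h (Zr C X Y) = Zr C X Z" if X: "X \<in> Ob C" and h: "h \<in> hom C Y Z" for X Y Z h
  proof (rule idempotent_eq_zero[OF C])
    have Y: "Y \<in> Ob C" using category_hom_Ob[OF cat h] by blast
    have z: "Zr C X Y \<in> hom C X Y" using C X Y unfolding is_preadditive_def by blast
    then show "Cp C h (Zr C X Y) \<in> hom C X Z" using comp_hom[OF cat _ h] by blast
    show "Ad C (Cp C h (Zr C X Y)) (Cp C h (Zr C X Y)) = Cp C h (Zr C X Y)"
      using comp_add_left[OF C z z h] zero_add_zero[OF C X Y] by simp
  qed
  show "Cp C (Zr C Y Z) h = Zr C X Z" if Z: "Z \<in> Ob C" and h: "h \<in> hom C X Y" for X Y Z h
  proof (rule idempotent_eq_zero[OF C])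
    have Y: "Y \<in> Ob C" using category_hom_Ob[OF cat h] by blast
    have z: "Zr C Y Z \<in> hom C Y Z" using C Y Z unfolding is_preadditive_def by blast
    then show "Cp C (Zr C Y Z) h \<in> hom C X Z" using comp_hom[OF cat h] by blast
    show "Ad C (Cp C (Zr C Y Z) h) (Cp C (Zr C Y Z) h) = Cp C (Zr C Y Z) h"
      using comp_add_right[OF C h z z] zero_add_zero[OF C Y Z] by simp
  qed
qed

lemma zero_morphisms_category: "has_zero_morphisms C \<Longrightarrow> is_category C"
  unfolding has_zero_morphisms_def by blast

lemma zero_hom:
  "has_zero_morphisms C \<Longrightarrow> X \<in> Ob C \<Longrightarrow> Y \<in> Ob C \<Longrightarrow> Zr C X Y \<in> hom C X Y"
  unfolding has_zero_morphisms_def by blast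

lemma comp_zero_right:
  "has_zero_morphisms C \<Longrightarrow> X \<in> Ob C \<Longrightarrow> h \<in> hom C Y Z \<Longrightarrow> Cp C h (Zr C X Y) = Zr C X Z"
  unfolding has_zero_morphisms_def by blast

lemma comp_zero_left:
  "has_zero_morphisms C \<Longrightarrow> Z \<in> Ob C \<Longrightarrow> h \<in> hom C X Y \<Longrightarrow> Cp C (Zr C Y Z) h = Zr C X Z"
  unfolding has_zero_morphisms_def by blast

definition opposite_cat :: "('o, 'm) precat \<Rightarrow> ('o, 'm) precat" where
  "opposite_cat C =
     C\<lparr>Dm := Cd C, Cd := Dm C, Cp := (\<lambda>g f. Cp C f g), Zr := (\<lambda>X Y. Zr C Y X)\<rparr>"

lemma opposite_cat_simps [simp]:
  "Ob (opposite_cat C) = Ob C" "Ar (opposite_cat C) = Ar C"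
  "Dm (opposite_cat C) = Cd C" "Cd (opposite_cat C) = Dm C" "Idm (opposite_cat C) = Idm C"
  "Cp (opposite_cat C) g f = Cp C f g" "Ad (opposite_cat C) = Ad C"
  "Zr (opposite_cat C) X Y = Zr C Y X" "Ng (opposite_cat C) = Ng C"
  by (simp_all add: opposite_cat_def)

lemma hom_opposite_cat [simp]: "hom (opposite_cat C) X Y = hom C Y X"
  by (auto simp: hom_def)

lemma is_category_opposite_cat: "is_category C \<Longrightarrow> is_category (opposite_cat C)"
  unfolding is_category_def by simp

lemma has_zero_morphisms_opposite_cat:
  "has_zero_morphisms C \<Longrightarrow> has_zero_morphisms (opposite_cat C)"
  unfolding has_zero_morphisms_def by (simp add: is_category_opposite_cat)

lemma is_kernel_opposite_cat [simp]: "is_kernel (opposite_cat C) f g \<longleftrightarrow> is_cokernel C f g"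
  unfolding is_kernel_def is_cokernel_def by auto

lemma is_mono_opposite_cat [simp]: "is_mono (opposite_cat C) f \<longleftrightarrow> is_epi C f"
  unfolding is_mono_def is_epi_def by simp

lemma is_epi_opposite_cat [simp]: "is_epi (opposite_cat C) f \<longleftrightarrow> is_mono C f"
  unfolding is_mono_def is_epi_def by simp

lemma is_iso_opposite_cat [simp]: "is_iso (opposite_cat C) f \<longleftrightarrow> is_iso C f"
  unfolding is_iso_def by auto

lemma isoI:
  "a \<in> hom C X Y \<Longrightarrow> a' \<in> hom C Y X \<Longrightarrow> Cp C a' a = Idm C X \<Longrightarrow> Cp C a a' = Idm C Y \<Longrightarrow>
    is_iso C a"
  unfolding is_iso_def hom_def by auto

lemma isoE:
  assumes "is_iso C a"
  obtains a' where "a \<in> hom C (Dm C a) (Cd C a)" "a' \<in> hom C (Cd C a) (Dm C a)"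
    "Cp C a' a = Idm C (Dm C a)" "Cp C a a' = Idm C (Cd C a)"
  using assms unfolding is_iso_def hom_def by auto

lemma iso_id:
  assumes C: "is_category C" and X: "X \<in> Ob C"
  shows "is_iso C (Idm C X)"
proof -
  have i: "Idm C X \<in> hom C X X" using id_hom[OF C X] .
  show ?thesis using isoI[OF i i] comp_id_left[OF C i] by simp
qed

lemma monoI:
  "f \<in> Ar C \<Longrightarrow>
    (\<And>T u v. u \<in> hom C T (Dm C f) \<Longrightarrow> v \<in> hom C T (Dm C f) \<Longrightarrow> Cp C f u = Cp C f v \<Longrightarrow> u = v)
    \<Longrightarrow> is_mono C f"
  unfolding is_mono_def by blast

lemma monoD:
  "is_mono C f \<Longrightarrow> u \<in> hom C T (Dm C f) \<Longrightarrow> v \<in> hom C T (Dm C f) \<Longrightarrow> Cp C f u = Cp C f v \<Longrightarrow>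
    u = v"
  unfolding is_mono_def by blast

lemma epiD:
  "is_epi C f \<Longrightarrow> u \<in> hom C (Cd C f) T \<Longrightarrow> v \<in> hom C (Cd C f) T \<Longrightarrow> Cp C u f = Cp C v f \<Longrightarrow>
    u = v"
  unfolding is_epi_def by blast

lemma iso_is_mono:
  assumes C: "is_category C" and a: "is_iso C a"
  shows "is_mono C a"
proof -
  obtain a' where ah: "a \<in> hom C (Dm C a) (Cd C a)" and a'h: "a' \<in> hom C (Cd C a) (Dm C a)"
    and a'a: "Cp C a' a = Idm C (Dm C a)"
    using isoE[OF a] by metis
  show ?thesis
  proof (rule monoI)
    show "a \<in> Ar C" using ah by (simp add: hom_def)
    fix T u v assume u: "u \<in> hom C T (Dm C a)" and v: "v \<in> hom C T (Dm C a)"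
      and eq: "Cp C a u = Cp C a v"
    have "u = Cp C (Cp C a' a) u" using comp_id_left[OF C u] a'a by simp
    also have "\<dots> = Cp C (Cp C a' a) v"
      using eq cat_comp_assoc[OF C u ah a'h] cat_comp_assoc[OF C v ah a'h] by simp
    also have "\<dots> = v" using comp_id_left[OF C v] a'a by simp
    finally show "u = v" .
  qed
qed

lemma mono_comp:
  assumes C: "is_category C" and f: "f \<in> hom C X Y" and g: "g \<in> hom C Y Z"
    and mf: "is_mono C f" and mg: "is_mono C g"
  shows "is_mono C (Cp C g f)"
proof (rule monoI)
  have gf: "Cp C g f \<in> hom C X Z" using comp_hom[OF C f g] .
  then show "Cp C g f \<in> Ar C" by (simp add: hom_def)
  fix T u v assume u: "u \<in> hom C T (Dm C (Cp C g f))" and v: "v \<in> hom C T (Dm C (Cp C g f))"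
    and eq: "Cp C (Cp C g f) u = Cp C (Cp C g f) v"
  have u: "u \<in> hom C T X" and v: "v \<in> hom C T X" using u v gf by (simp_all add: hom_def)
  have "Cp C g (Cp C f u) = Cp C g (Cp C f v)"
    using eq cat_comp_assoc[OF C u f g] cat_comp_assoc[OF C v f g] by simp
  then have "Cp C f u = Cp C f v"
    using monoD[OF mg] comp_hom[OF C u f] comp_hom[OF C v f] g by (simp add: hom_def)
  then show "u = v" using monoD[OF mf] u v f by (simp add: hom_def)
qed

lemma epi_comp:
  "is_category C \<Longrightarrow> f \<in> hom C X Y \<Longrightarrow> g \<in> hom C Y Z \<Longrightarrow> is_epi C f \<Longrightarrow> is_epi C g \<Longrightarrow>
    is_epi C (Cp C g f)"
  using mono_comp[OF is_category_opposite_cat, of C g Z Y f X] by simp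

lemma mono_of_comp_mono:
  assumes C: "is_category C" and f: "f \<in> hom C X Y" and g: "g \<in> hom C Y Z"
    and mgf: "is_mono C (Cp C g f)"
  shows "is_mono C f"
proof (rule monoI)
  show "f \<in> Ar C" using f by (simp add: hom_def)
  fix T u v assume u: "u \<in> hom C T (Dm C f)" and v: "v \<in> hom C T (Dm C f)"
    and eq: "Cp C f u = Cp C f v"
  have u: "u \<in> hom C T X" and v: "v \<in> hom C T X" using u v f by (simp_all add: hom_def)
  have "Cp C (Cp C g f) u = Cp C (Cp C g f) v"
    using eq cat_comp_assoc[OF C u f g] cat_comp_assoc[OF C v f g] by simp
  then show "u = v" using monoD[OF mgf] comp_hom[OF C f g] u v by (simp add: hom_def)
qed

lemma epi_of_comp_epi:
  "is_category C \<Longrightarrow> f \<in> hom C X Y \<Longrightarrow> g \<in> hom C Y Z \<Longrightarrow> is_epi C (Cp C g f) \<Longrightarrow> is_epi C g"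
  using mono_of_comp_mono[OF is_category_opposite_cat, of C g Z Y f X] by simp

lemma kernelD:
  assumes "is_kernel C f g"
  shows "f \<in> hom C (Dm C f) (Dm C g)" and "g \<in> hom C (Dm C g) (Cd C g)"
    and "Cp C g f = Zr C (Dm C f) (Cd C g)"
    and "\<And>T h. h \<in> hom C T (Dm C g) \<Longrightarrow> Cp C g h = Zr C T (Cd C g) \<Longrightarrow>
           \<exists>!u. u \<in> hom C T (Dm C f) \<and> Cp C f u = h"
  using assms unfolding is_kernel_def hom_def by simp_all

lemma kernelI_mono:
  assumes mono: "is_mono C f" and g: "g \<in> Ar C" and fg: "Cd C f = Dm C g"
    and zero: "Cp C g f = Zr C (Dm C f) (Cd C g)"
    and factor: "\<And>T h. h \<in> hom C T (Dm C g) \<Longrightarrow> Cp C g h = Zr C T (Cd C g) \<Longrightarrow>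
                   \<exists>u \<in> hom C T (Dm C f). Cp C f u = h"
  shows "is_kernel C f g"
  unfolding is_kernel_def
proof (intro conjI allI impI)
  show "f \<in> Ar C" using mono by (simp add: is_mono_def)
  fix T h assume "h \<in> hom C T (Dm C g)" "Cp C g h = Zr C T (Cd C g)"
  then obtain u where "u \<in> hom C T (Dm C f)" "Cp C f u = h" using factor by blast
  then show "\<exists>!u. u \<in> hom C T (Dm C f) \<and> Cp C f u = h" using monoD[OF mono] by blast
qed (use g fg zero in simp_all)

lemma kernel_is_mono:
  assumes C: "has_zero_morphisms C" and k: "is_kernel C f g"
  shows "is_mono C f"
proof (rule monoI)
  have cat: "is_category C" using C by (rule zero_morphisms_category)
  note f = kernelD(1)[OF k] and g = kernelD(2)[OF k]
  have W: "Cd C g \<in> Ob C" using category_hom_Ob[OF cat g] by blast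
  show "f \<in> Ar C" using f by (simp add: hom_def)
  fix T u v assume u: "u \<in> hom C T (Dm C f)" and v: "v \<in> hom C T (Dm C f)"
    and eq: "Cp C f u = Cp C f v"
  have fu: "Cp C f u \<in> hom C T (Dm C g)" using comp_hom[OF cat u f] .
  have "Cp C g (Cp C f u) = Cp C (Zr C (Dm C f) (Cd C g)) u"
    using cat_comp_assoc[OF cat u f g] kernelD(3)[OF k] by simp
  also have "\<dots> = Zr C T (Cd C g)" using comp_zero_left[OF C W u] .
  finally have "\<exists>!w. w \<in> hom C T (Dm C f) \<and> Cp C f w = Cp C f u"
    using kernelD(4)[OF k fu] by simp
  then show "u = v" using u v eq by (auto simp: ex1_iff_ex_Uniq dest: Uniq_D)
qed

lemma kernel_epi_iso:
  assumes C: "has_zero_morphisms C" and k: "is_kernel C f g" and epi: "is_epi C f"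
  shows "is_iso C f"
proof -
  have cat: "is_category C" using C by (rule zero_morphisms_category)
  define X Y W where "X = Dm C f" and "Y = Dm C g" and "W = Cd C g"
  have f: "f \<in> hom C X Y" and g: "g \<in> hom C Y W"
    using kernelD(1,2)[OF k] unfolding X_def Y_def W_def .
  have X: "X \<in> Ob C" and Y: "Y \<in> Ob C" and W: "W \<in> Ob C"
    using category_hom_Ob[OF cat f] category_hom_Ob[OF cat g] by auto
  have "Cp C g f = Cp C (Zr C Y W) f"
    using kernelD(3)[OF k] comp_zero_left[OF C W f] unfolding X_def W_def by simp
  then have g0: "g = Zr C Y W"
    using epiD[OF epi] g zero_hom[OF C Y W] f by (simp add: hom_def)
  have "Cp C g (Idm C Y) = Zr C Y W" using comp_id_right[OF cat g] g0 by simp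
  then obtain u where u: "u \<in> hom C Y X" and fu: "Cp C f u = Idm C Y"
    using kernelD(4)[OF k, of "Idm C Y" Y] id_hom[OF cat Y] unfolding X_def Y_def W_def by blast
  have "Cp C f (Cp C u f) = Cp C f (Idm C X)"
    using cat_comp_assoc[OF cat f u f] fu comp_id_left[OF cat f] comp_id_right[OF cat f] by simp
  then have "Cp C u f = Idm C X"
    using monoD[OF kernel_is_mono[OF C k]] comp_hom[OF cat f u] id_hom[OF cat X]
    unfolding X_def by blast
  then show ?thesis using isoI[OF f u] fu by blast
qed

lemma kernel_precomp_iso:
  assumes C: "has_zero_morphisms C" and k: "is_kernel C f g"
    and iso: "is_iso C a" and af: "Cd C a = Dm C f"
  shows "is_kernel C (Cp C f a) g"
proof -
  have cat: "is_category C" using C by (rule zero_morphisms_category)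
  define X where "X = Dm C a"
  obtain a' where a: "a \<in> hom C X (Dm C f)" and a': "a' \<in> hom C (Dm C f) X"
    and aa': "Cp C a a' = Idm C (Dm C f)"
    using isoE[OF iso] unfolding X_def af by metis
  note f = kernelD(1)[OF k] and g = kernelD(2)[OF k]
  have fa: "Cp C f a \<in> hom C X (Dm C g)" using comp_hom[OF cat a f] .
  have W: "Cd C g \<in> Ob C" using category_hom_Ob[OF cat g] by blast
  show ?thesis
  proof (rule kernelI_mono)
    show "is_mono C (Cp C f a)"
      using mono_comp[OF cat a f iso_is_mono[OF cat iso] kernel_is_mono[OF C k]] .
    show "g \<in> Ar C" "Cd C (Cp C f a) = Dm C g" using g fa by (simp_all add: hom_def)
    have "Cp C g (Cp C f a) = Cp C (Zr C (Dm C f) (Cd C g)) a"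
      using cat_comp_assoc[OF cat a f g] kernelD(3)[OF k] by simp
    also have "\<dots> = Zr C X (Cd C g)" using comp_zero_left[OF C W a] .
    finally show "Cp C g (Cp C f a) = Zr C (Dm C (Cp C f a)) (Cd C g)"
      using fa by (simp add: hom_def)
    fix T h assume "h \<in> hom C T (Dm C g)" "Cp C g h = Zr C T (Cd C g)"
    then obtain u where u: "u \<in> hom C T (Dm C f)" and fu: "Cp C f u = h"
      using kernelD(4)[OF k] by blast
    have "Cp C (Cp C f a) (Cp C a' u) = Cp C f (Cp C (Cp C a a') u)"
      using cat_comp_assoc[OF cat comp_hom[OF cat u a'] a f] cat_comp_assoc[OF cat u a' a] by simp
    also have "\<dots> = h" using aa' comp_id_left[OF cat u] fu by simp
    finally show "\<exists>w \<in> hom C T (Dm C (Cp C f a)). Cp C (Cp C f a) w = h"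
      using comp_hom[OF cat u a'] fa by (auto simp: hom_def)
  qed
qed

lemma kernel_of_postcomp_iso:
  assumes C: "has_zero_morphisms C" and k: "is_kernel C f g"
    and iso: "is_iso C c" and gc: "Dm C c = Cd C g"
  shows "is_kernel C f (Cp C c g)"
proof -
  have cat: "is_category C" using C by (rule zero_morphisms_category)
  define W where "W = Cd C c"
  have c: "c \<in> hom C (Cd C g) W" using isoE[OF iso] unfolding W_def gc by metis
  note f = kernelD(1)[OF k] and g = kernelD(2)[OF k]
  have cg: "Cp C c g \<in> hom C (Dm C g) W" using comp_hom[OF cat g c] .
  have X: "Dm C f \<in> Ob C" using category_hom_Ob[OF cat f] by blast
  show ?thesis
  proof (rule kernelI_mono)
    show "is_mono C f" using kernel_is_mono[OF C k] .
    show "Cp C c g \<in> Ar C" "Cd C f = Dm C (Cp C c g)" using cg f by (simp_all add: hom_def)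
    have "Cp C (Cp C c g) f = Cp C c (Zr C (Dm C f) (Cd C g))"
      using cat_comp_assoc[OF cat f g c] kernelD(3)[OF k] by simp
    also have "\<dots> = Zr C (Dm C f) W" using comp_zero_right[OF C X c] .
    finally show "Cp C (Cp C c g) f = Zr C (Dm C f) (Cd C (Cp C c g))"
      using cg by (simp add: hom_def)
    fix T h assume h: "h \<in> hom C T (Dm C (Cp C c g))"
      and cgh: "Cp C (Cp C c g) h = Zr C T (Cd C (Cp C c g))"
    have h: "h \<in> hom C T (Dm C g)" and T: "T \<in> Ob C"
      using h cg category_hom_Ob[OF cat h] by (auto simp: hom_def)
    have "Cp C c (Cp C g h) = Zr C T W"
      using cat_comp_assoc[OF cat h g c] cgh cg by (simp add: hom_def)
    also have "\<dots> = Cp C c (Zr C T (Cd C g))" using comp_zero_right[OF C T c] by simp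
    finally have eq: "Cp C c (Cp C g h) = Cp C c (Zr C T (Cd C g))" .
    have W: "Cd C g \<in> Ob C" using category_hom_Ob[OF cat g] by blast
    have "Cp C g h = Zr C T (Cd C g)"
      using monoD[OF iso_is_mono[OF cat iso] _ _ eq] comp_hom[OF cat h g] zero_hom[OF C T W] gc
      by simp
    then show "\<exists>u \<in> hom C T (Dm C f). Cp C f u = h" using kernelD(4)[OF k h] by blast
  qed
qed

lemma cokernel_is_epi: "has_zero_morphisms C \<Longrightarrow> is_cokernel C g f \<Longrightarrow> is_epi C g"
  using kernel_is_mono[OF has_zero_morphisms_opposite_cat, of C g f] by simp

lemma cokernel_mono_iso:
  "has_zero_morphisms C \<Longrightarrow> is_cokernel C g f \<Longrightarrow> is_mono C g \<Longrightarrow> is_iso C g"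
  using kernel_epi_iso[OF has_zero_morphisms_opposite_cat, of C g f] by simp

lemma cokernel_postcomp_iso:
  "has_zero_morphisms C \<Longrightarrow> is_cokernel C g f \<Longrightarrow> is_iso C c \<Longrightarrow> Dm C c = Cd C g \<Longrightarrow>
    is_cokernel C (Cp C c g) f"
  using kernel_precomp_iso[OF has_zero_morphisms_opposite_cat, of C g f c] by simp

lemma cokernel_of_precomp_iso:
  "has_zero_morphisms C \<Longrightarrow> is_cokernel C g f \<Longrightarrow> is_iso C a \<Longrightarrow> Cd C a = Dm C f \<Longrightarrow>
    is_cokernel C g (Cp C f a)"
  using kernel_of_postcomp_iso[OF has_zero_morphisms_opposite_cat, of C g f a] by simp

lemma epi_into_zero_object:
  assumes C: "is_category C" and Z: "zero_object C Z" and f: "f \<in> hom C X Z"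
  shows "is_epi C f"
  unfolding is_epi_def
proof (intro conjI allI impI)
  show "f \<in> Ar C" using f by (simp add: hom_def)
  fix T u v assume "u \<in> hom C (Cd C f) T" "v \<in> hom C (Cd C f) T"
  then have "u \<in> hom C Z T" "v \<in> hom C Z T" "T \<in> Ob C"
    using f category_hom_Ob[OF C] by (auto simp: hom_def)
  then show "u = v" using Z unfolding zero_object_def by blast
qed

lemma epi_from_zero_object_iso:
  assumes C: "is_category C" and Z: "zero_object C Z" and d: "d \<in> hom C Z Y"
    and epi: "is_epi C d"
  shows "is_iso C d"
proof -
  have ZO: "Z \<in> Ob C" and Y: "Y \<in> Ob C" using category_hom_Ob[OF C d] by auto
  obtain d' where d': "d' \<in> hom C Y Z" using Z Y unfolding zero_object_def by blast
  have d'd: "Cp C d' d = Idm C Z"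
    using comp_hom[OF C d d'] id_hom[OF C ZO] Z ZO unfolding zero_object_def by blast
  have "Cp C (Cp C d d') d = Cp C (Idm C Y) d"
    using cat_comp_assoc[OF C d d' d] d'd comp_id_right[OF C d] comp_id_left[OF C d] by simp
  then have "Cp C d d' = Idm C Y"
    using epiD[OF epi] comp_hom[OF C d' d] id_hom[OF C Y] d by (simp add: hom_def)
  then show ?thesis using isoI[OF d d' d'd] by blast
qed

lemma conflation_category_has_zero_morphisms:
  "conflation_category C E \<Longrightarrow> has_zero_morphisms C"
  unfolding conflation_category_def is_additive_def by (blast intro: preadditive_has_zero_morphisms)

lemma conflation_kernel_cokernel:
  assumes "conflation_category C E" and "(f, g) \<in> E"
  shows "is_kernel C f g" and "is_cokernel C g f"
  using assms unfolding conflation_category_def kernel_cokernel_pair_def by blast+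

lemma conflation_iso_closed:
  assumes "conflation_category C E" and "(f, g) \<in> E" and "kernel_cokernel_pair C f' g'"
    and "a \<in> hom C (Dm C f) (Dm C f')" and "b \<in> hom C (Cd C f) (Cd C f')"
    and "c \<in> hom C (Cd C g) (Cd C g')"
    and "is_iso C a" and "is_iso C b" and "is_iso C c"
    and "Cp C b f = Cp C f' a" and "Cp C c g = Cp C g' b"
  shows "(f', g') \<in> E"
  using assms unfolding conflation_category_def by blast

lemma conflation_comp_isos:
  assumes CC: "conflation_category C E" and fg: "(f, g) \<in> E"
    and a: "is_iso C a" and af: "Cd C a = Dm C f"
    and c: "is_iso C c" and gc: "Dm C c = Cd C g"
  shows "(Cp C f a, Cp C c g) \<in> E"
proof -
  have Z: "has_zero_morphisms C" using CC by (rule conflation_category_has_zero_morphisms)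
  have cat: "is_category C" using Z by (rule zero_morphisms_category)
  note K = conflation_kernel_cokernel[OF CC fg]
  have kcp: "kernel_cokernel_pair C (Cp C f a) (Cp C c g)"
    unfolding kernel_cokernel_pair_def
    using kernel_of_postcomp_iso[OF Z kernel_precomp_iso[OF Z K(1) a af] c gc]
      cokernel_of_precomp_iso[OF Z cokernel_postcomp_iso[OF Z K(2) c gc] a af]
    by simp
  define X where "X = Dm C a"
  obtain a' where ah: "a \<in> hom C X (Dm C f)" and a'h: "a' \<in> hom C (Dm C f) X"
    and a'a: "Cp C a' a = Idm C X" and aa': "Cp C a a' = Idm C (Dm C f)"
    using isoE[OF a] unfolding X_def af by metis
  have ch: "c \<in> hom C (Cd C g) (Cd C c)" using isoE[OF c] gc by metis
  note f = kernelD(1)[OF K(1)] and g = kernelD(2)[OF K(1)]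
  have fa: "Cp C f a \<in> hom C X (Dm C g)" using comp_hom[OF cat ah f] .
  have cg: "Cp C c g \<in> hom C (Dm C g) (Cd C c)" using comp_hom[OF cat g ch] .
  have B: "Dm C g \<in> Ob C" using category_hom_Ob[OF cat g] by blast
  have "Cp C (Cp C f a) a' = Cp C f (Idm C (Dm C f))"
    using cat_comp_assoc[OF cat a'h ah f] aa' by simp
  then have square1: "Cp C (Idm C (Dm C g)) f = Cp C (Cp C f a) a'"
    using comp_id_left[OF cat f] comp_id_right[OF cat f] by simp
  have square2: "Cp C c g = Cp C (Cp C c g) (Idm C (Dm C g))"
    using comp_id_right[OF cat cg] by simp
  show ?thesis
  proof (rule conflation_iso_closed[OF CC fg kcp _ _ _ _ iso_id[OF cat B] c square1 square2])
    show "a' \<in> hom C (Dm C f) (Dm C (Cp C f a))"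
      "Idm C (Dm C g) \<in> hom C (Cd C f) (Cd C (Cp C f a))"
      "c \<in> hom C (Cd C g) (Cd C (Cp C c g))"
      using a'h fa f cg ch id_hom[OF cat B] by (simp_all add: hom_def)
    show "is_iso C a'" using isoI[OF a'h ah aa' a'a] .
  qed
qed

lemma inflation_precomp_iso:
  assumes CC: "conflation_category C E" and f: "inflation E f"
    and a: "is_iso C a" and af: "Cd C a = Dm C f"
  shows "inflation E (Cp C f a)"
proof -
  have cat: "is_category C"
    using zero_morphisms_category[OF conflation_category_has_zero_morphisms[OF CC]] .
  obtain g where fg: "(f, g) \<in> E" using f unfolding inflation_def by blast
  have g: "g \<in> hom C (Dm C g) (Cd C g)" using kernelD(2)[OF conflation_kernel_cokernel(1)[OF CC fg]] .
  have W: "Cd C g \<in> Ob C" using category_hom_Ob[OF cat g] by blast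
  have "(Cp C f a, Cp C (Idm C (Cd C g)) g) \<in> E"
    using conflation_comp_isos[OF CC fg a af iso_id[OF cat W]] id_hom[OF cat W]
    by (simp add: hom_def)
  then show ?thesis using comp_id_left[OF cat g] unfolding inflation_def by auto
qed

lemma deflation_postcomp_iso:
  assumes CC: "conflation_category C E" and g: "deflation E g"
    and c: "is_iso C c" and gc: "Dm C c = Cd C g"
  shows "deflation E (Cp C c g)"
proof -
  have cat: "is_category C"
    using zero_morphisms_category[OF conflation_category_has_zero_morphisms[OF CC]] .
  obtain f where fg: "(f, g) \<in> E" using g unfolding deflation_def by blast
  have f: "f \<in> hom C (Dm C f) (Dm C g)" using kernelD(1)[OF conflation_kernel_cokernel(1)[OF CC fg]] .
  have X: "Dm C f \<in> Ob C" using category_hom_Ob[OF cat f] by blast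
  have "(Cp C f (Idm C (Dm C f)), Cp C c g) \<in> E"
    using conflation_comp_isos[OF CC fg iso_id[OF cat X] _ c gc] id_hom[OF cat X]
    by (simp add: hom_def)
  then show ?thesis using comp_id_right[OF cat f] unfolding deflation_def by auto
qed

lemma percolating_factorization:
  assumes "adm_deflation_percolating C E \<A>" and "A \<in> \<A>" and "h \<in> hom C X A"
  obtains A' d i where "A' \<in> \<A>" and "d \<in> hom C X A'" and "i \<in> hom C A' A"
    and "deflation E d" and "inflation E i" and "Cp C i d = h"
  using assms unfolding adm_deflation_percolating_def by blast

lemma mono_into_percolating_is_inflation:
  assumes CC: "conflation_category C E" and AD: "adm_deflation_percolating C E \<A>"
    and A: "A \<in> \<A>" and f: "f \<in> hom C X A" and mono: "is_mono C f"
  shows "inflation E f"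
proof -
  have Z: "has_zero_morphisms C" using CC by (rule conflation_category_has_zero_morphisms)
  have cat: "is_category C" using Z by (rule zero_morphisms_category)
  obtain A' d i where d: "d \<in> hom C X A'" and i: "i \<in> hom C A' A"
    and "deflation E d" and "inflation E i" and f_eq: "Cp C i d = f"
    using percolating_factorization[OF AD A f] by metis
  then obtain k where "(k, d) \<in> E" unfolding deflation_def by blast
  moreover have "is_mono C d" using mono_of_comp_mono[OF cat d i] mono f_eq by simp
  ultimately have "is_iso C d"
    using cokernel_mono_iso[OF Z conflation_kernel_cokernel(2)[OF CC]] by blast
  then have "inflation E (Cp C i d)"
    using inflation_precomp_iso[OF CC \<open>inflation E i\<close>] d i by (simp add: hom_def)
  with f_eq show ?thesis by simp
qed

lemma epi_into_percolating_is_deflation: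
  assumes CC: "conflation_category C E" and AD: "adm_deflation_percolating C E \<A>"
    and A: "A \<in> \<A>" and f: "f \<in> hom C X A" and epi: "is_epi C f"
  shows "deflation E f"
proof -
  have Z: "has_zero_morphisms C" using CC by (rule conflation_category_has_zero_morphisms)
  have cat: "is_category C" using Z by (rule zero_morphisms_category)
  obtain A' d i where d: "d \<in> hom C X A'" and i: "i \<in> hom C A' A"
    and "deflation E d" and "inflation E i" and f_eq: "Cp C i d = f"
    using percolating_factorization[OF AD A f] by metis
  from \<open>inflation E i\<close> obtain g where "(i, g) \<in> E" unfolding inflation_def by blast
  moreover have "is_epi C i" using epi_of_comp_epi[OF cat d i] epi f_eq by simp
  ultimately have "is_iso C i"
    using kernel_epi_iso[OF Z conflation_kernel_cokernel(1)[OF CC]] by blast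
  then have "deflation E (Cp C i d)"
    using deflation_postcomp_iso[OF CC \<open>deflation E d\<close>] d i by (simp add: hom_def)
  with f_eq show ?thesis by simp
qed

lemma morphism_into_zero_object_is_deflation:
  assumes CC: "conflation_category C E" and AD: "adm_deflation_percolating C E \<A>"
    and Z: "zero_object C Z" and f: "f \<in> hom C X Z"
  shows "deflation E f"
proof -
  have HZ: "has_zero_morphisms C" using CC by (rule conflation_category_has_zero_morphisms)
  have cat: "is_category C" using HZ by (rule zero_morphisms_category)
  obtain A where A: "A \<in> \<A>" and AO: "A \<in> Ob C"
    using AD unfolding adm_deflation_percolating_def by blast
  have ZO: "Z \<in> Ob C" using Z unfolding zero_object_def by blast
  obtain A' d where A': "A' \<in> \<A>" and d: "d \<in> hom C Z A'" and "deflation E d"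
    using percolating_factorization[OF AD A zero_hom[OF HZ ZO AO]] by metis
  then obtain k where "(k, d) \<in> E" unfolding deflation_def by blast
  then have d_epi: "is_epi C d"
    using cokernel_is_epi[OF HZ conflation_kernel_cokernel(2)[OF CC]] by blast
  have dD: "Dm C d = Z" "Cd C d = A'" using d by (simp_all add: hom_def)
  obtain d' where d': "d' \<in> hom C A' Z" and d'd: "Cp C d' d = Idm C Z"
    and dd': "Cp C d d' = Idm C A'"
    using isoE[OF epi_from_zero_object_iso[OF cat Z d d_epi]] unfolding dD by blast
  have df: "Cp C d f \<in> hom C X A'" using comp_hom[OF cat f d] .
  have "deflation E (Cp C d f)"
    using epi_into_percolating_is_deflation[OF CC AD A' df]
      epi_comp[OF cat f d epi_into_zero_object[OF cat Z f] d_epi] by blast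
  then have "deflation E (Cp C d' (Cp C d f))"
    using deflation_postcomp_iso[OF CC _ isoI[OF d' d dd' d'd]] d' df by (simp add: hom_def)
  moreover have "Cp C d' (Cp C d f) = f"
    using cat_comp_assoc[OF cat f d d'] d'd comp_id_left[OF cat f] by simp
  ultimately show ?thesis by simp
qed

theorem mainTheorem14:
  fixes C :: "('o, 'm) precat" and E :: "('m \<times> 'm) set" and \<A> :: "'o set"
  assumes "conflation_category C E"
    and "adm_deflation_percolating C E \<A>"
  shows "(\<forall>X A f. A \<in> \<A> \<longrightarrow> f \<in> hom C X A \<longrightarrow>
            (is_mono C f \<longrightarrow> inflation E f) \<and> (is_epi C f \<longrightarrow> deflation E f))
       \<and> (\<forall>X Z f. zero_object C Z \<longrightarrow> f \<in> hom C X Z \<longrightarrow> deflation E f)"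
  using mono_into_percolating_is_inflation[OF assms] epi_into_percolating_is_deflation[OF assms]
    morphism_into_zero_object_is_deflation[OF assms]
  by blast

end
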